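(* Under the standing setup, every vertex $v\in R'$ satisfies $d_G(v)>\frac13\alpha n$.
   Context: Standing setup: $k\ge1$, $\ell\ge4$ integers; $h=k+\lfloor\ell/2\rfloor-1$; $t=(\ell^2-\ell+1)k+\frac{\ell^2+3\ell-2}{2}$; $\alpha=\frac{1}{2(h+1)t^2}$; $n\ge t^2/\alpha^3$. $G$ is a graph of order $n$ that contains no copy of $kS_{\ell-1}\cup P_\ell$ (vertex-disjoint union of $k$ stars $K_{1,\ell-1}$ and a path on $\ell$ vertices) and has maximum spectral radius $\rho=\rho(G)$ among all such graphs of order $n$; $G$ is connected. $\mathbf{x}=(x_v)$ is the Perron vector of $G$, and $z$ is a vertex with $x_z=\max_v x_v$. $R'=\{v\in V(G): x_v>4\alpha x_z\}$. $d_G(v)$ is the degree of $v$. *)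

theory Defs
  imports Complex_Main "Jordan_Normal_Form.Spectral_Radius"
begin

definition simple_graph :: "nat \<Rightarrow> (nat \<Rightarrow> nat \<Rightarrow> bool) \<Rightarrow> bool" where
  "simple_graph n E \<longleftrightarrow>
     (\<forall>u v. E u v \<longrightarrow> u < n \<and> v < n \<and> u \<noteq> v) \<and> (\<forall>u v. E u v \<longrightarrow> E v u)"

definition graph_connected :: "nat \<Rightarrow> (nat \<Rightarrow> nat \<Rightarrow> bool) \<Rightarrow> bool" where
  "graph_connected n E \<longleftrightarrow> (\<forall>u v. u < n \<longrightarrow> v < n \<longrightarrow> E\<^sup>*\<^sup>* u v)"

definition degree :: "nat \<Rightarrow> (nat \<Rightarrow> nat \<Rightarrow> bool) \<Rightarrow> nat \<Rightarrow> nat" where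
  "degree n E v = card {u. u < n \<and> E u v}"

definition adj_mat :: "nat \<Rightarrow> (nat \<Rightarrow> nat \<Rightarrow> bool) \<Rightarrow> complex mat" where
  "adj_mat n E = mat n n (\<lambda>(i, j). if E i j then 1 else 0)"

definition graph_spectral_radius :: "nat \<Rightarrow> (nat \<Rightarrow> nat \<Rightarrow> bool) \<Rightarrow> real" where
  "graph_spectral_radius n E = spectral_radius (adj_mat n E)"

definition contains_copy ::
  "nat \<Rightarrow> (nat \<Rightarrow> nat \<Rightarrow> bool) \<Rightarrow> 'b set \<Rightarrow> ('b \<Rightarrow> 'b \<Rightarrow> bool) \<Rightarrow> bool" where
  "contains_copy n E HV HE \<longleftrightarrow>
     (\<exists>f. inj_on f HV \<and> f ` HV \<subseteq> {..<n} \<and> (\<forall>a\<in>HV. \<forall>b\<in>HV. HE a b \<longrightarrow> E (f a) (f b)))"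

text \<open>The graph kS_{l-1} \<union> P_l: star i (i<k) has vertices Inl (i,j), j<l, centre Inl (i,0)
  and leaves Inl (i,j), 1 \<le> j < l (so K_{1,l-1}); the path has vertices Inr p, p<l,
  with edges between consecutive ones.\<close>
definition starsPath_V :: "nat \<Rightarrow> nat \<Rightarrow> ((nat \<times> nat) + nat) set" where
  "starsPath_V k l = Inl ` ({..<k} \<times> {..<l}) \<union> Inr ` {..<l}"

fun starsPath_E :: "nat \<Rightarrow> nat \<Rightarrow> ((nat \<times> nat) + nat) \<Rightarrow> ((nat \<times> nat) + nat) \<Rightarrow> bool" where
  "starsPath_E k l (Inl (i, j)) (Inl (i', j')) =
     (i < k \<and> i = i' \<and> j < l \<and> j' < l \<and> ((j = 0 \<and> j' \<noteq> 0) \<or> (j \<noteq> 0 \<and> j' = 0)))"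
| "starsPath_E k l (Inr p) (Inr q) = (p < l \<and> q < l \<and> (q = p + 1 \<or> p = q + 1))"
| "starsPath_E k l _ _ = False"

definition H_free :: "nat \<Rightarrow> nat \<Rightarrow> nat \<Rightarrow> (nat \<Rightarrow> nat \<Rightarrow> bool) \<Rightarrow> bool" where
  "H_free k l n E \<longleftrightarrow> \<not> contains_copy n E (starsPath_V k l) (starsPath_E k l)"

end

theory Submission
  imports Defs
begin

text \<open>Scale the Perron vector so that its maximum is 1. Summing the eigen-equation over the
  neighbourhood of \<open>v\<close> gives \<open>\<rho>\<^sup>2 x\<^sub>v = \<Sum>\<^sub>w d\<^sub>N\<^sub>(\<^sub>v\<^sub>)(w) x\<^sub>w\<close>. Because \<open>G\<close> has no copy of
  \<open>kS\<^sub>l\<^sub>-\<^sub>1 \<union> P\<^sub>l\<close>, a greedy embedding of a spanning forest of that graph shows that there are at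
  most \<open>h|S| + 3(kl + l)|T|\<close> edges between any vertex sets \<open>S\<close> and \<open>T\<close>; hence the vertices with
  many neighbours in \<open>N(v)\<close> are few and \<open>\<rho>\<^sup>2 x\<^sub>v \<le> h d(v) + 3(kl + l) \<Sum> x\<close>, and likewise
  \<open>\<rho> \<Sum> x \<le> hn + 3(kl + l) \<Sum> x\<close>. Extremality against the \<open>H\<close>-free graph \<open>K\<^sub>h\<^sub>,\<^sub>n\<^sub>-\<^sub>h\<close> gives
  \<open>\<rho>\<^sup>2 \<ge> h(n - h)\<close>, so \<open>\<alpha>\<rho>\<close> exceeds \<open>3(kl + l)\<close>; then \<open>d(v) \<le> \<alpha>n/3\<close> would force \<open>x\<^sub>v \<le> 4\<alpha>\<close>.\<close>

lemma unused_element_of_pool: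
  assumes "finite X" and "\<forall>y\<in>X. g y \<in> pool y" and "card {y \<in> X. pool y \<inter> C \<noteq> {}} < card C"
  obtains u where "u \<in> C" "u \<notin> g ` X"
proof -
  have "\<not> C \<subseteq> g ` X"
  proof
    assume "C \<subseteq> g ` X"
    then have "C \<subseteq> g ` {y \<in> X. pool y \<inter> C \<noteq> {}}" using assms(2) by fastforce
    then have "card C \<le> card (g ` {y \<in> X. pool y \<inter> C \<noteq> {}})" using assms(1) by (simp add: card_mono)
    also have "\<dots> \<le> card {y \<in> X. pool y \<inter> C \<noteq> {}}" by (rule card_image_le) (use assms(1) in simp)
    finally show False using assms(3) by simp
  qed
  then show thesis using that by blast
qed

text \<open>The vertices are placed one at a time in order of rank, each adjacent to the image of its
  parent; fewer than \<open>need b\<close> earlier vertices compete for the pool of \<open>b\<close>, so a free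
  candidate always remains.\<close>

lemma greedy_forest_embedding:
  fixes vs :: "'b list" and U :: "'b set" and par :: "'b \<Rightarrow> 'b option" and rank :: "'b \<Rightarrow> nat"
    and pool :: "'b \<Rightarrow> nat set" and need :: "'b \<Rightarrow> nat" and E :: "nat \<Rightarrow> nat \<Rightarrow> bool"
  assumes "set vs \<subseteq> U" and "distinct vs" and "sorted (map rank vs)"
    and "\<And>b p. b \<in> set vs \<Longrightarrow> par b = Some p \<Longrightarrow> p \<in> set vs \<and> rank p < rank b"
    and "finite U"
    and root: "\<And>b. b \<in> U \<Longrightarrow> par b = None \<Longrightarrow> need b \<le> card (pool b)"
    and child: "\<And>b p w. b \<in> U \<Longrightarrow> par b = Some p \<Longrightarrow> w \<in> pool p \<Longrightarrow>
           need b \<le> card {u \<in> pool b. E w u}"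
    and conflicts: "\<And>b. b \<in> U \<Longrightarrow> card {y \<in> U. y \<noteq> b \<and> pool y \<inter> pool b \<noteq> {}} < need b"
  shows "\<exists>g. inj_on g (set vs) \<and> (\<forall>y\<in>set vs. g y \<in> pool y) \<and>
            (\<forall>y\<in>set vs. \<forall>p. par y = Some p \<longrightarrow> E (g p) (g y))"
  using assms(1-4)
proof (induction vs rule: rev_induct)
  case Nil
  then show ?case by auto
next
  case (snoc b xs)
  have b: "b \<in> U" "b \<notin> set xs" using snoc.prems(1,2) by auto
  have par_xs: "p \<in> set xs \<and> rank p < rank y" if "y \<in> set xs" "par y = Some p" for y p
  proof -
    have "rank y \<le> rank b" using snoc.prems(3) that(1) by (simp add: sorted_append)
    then show ?thesis using snoc.prems(4)[of y p] that by auto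
  qed
  obtain g where g_inj: "inj_on g (set xs)" and g_pool: "\<forall>y\<in>set xs. g y \<in> pool y"
    and g_edge: "\<forall>y\<in>set xs. \<forall>p. par y = Some p \<longrightarrow> E (g p) (g y)"
    using snoc.IH snoc.prems(1-3) par_xs by (auto simp: sorted_append)
  define C where "C = {u \<in> pool b. case par b of None \<Rightarrow> True | Some p \<Rightarrow> E (g p) u}"
  have "need b \<le> card C"
  proof (cases "par b")
    case None
    then show ?thesis using root[OF b(1)] by (simp add: C_def)
  next
    case (Some p)
    then have "g p \<in> pool p" using snoc.prems(4)[of b p] b(2) g_pool by auto
    then show ?thesis using child[OF b(1) Some] Some by (simp add: C_def)
  qed
  moreover have "card {y \<in> set xs. pool y \<inter> C \<noteq> {}} \<le> card {y \<in> U. y \<noteq> b \<and> pool y \<inter> pool b \<noteq> {}}"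
    using b snoc.prems(1) \<open>finite U\<close> by (intro card_mono) (auto simp: C_def)
  ultimately have "card {y \<in> set xs. pool y \<inter> C \<noteq> {}} < card C" using conflicts[OF b(1)] by linarith
  then obtain u where "u \<in> C" and u_fresh: "u \<notin> g ` set xs"
    using unused_element_of_pool[OF finite_set g_pool] by blast
  then have u_pool: "u \<in> pool b" and u_edge: "\<And>p. par b = Some p \<Longrightarrow> E (g p) u"
    by (auto simp: C_def)
  have "inj_on (g(b := u)) (set (xs @ [b]))"
    using inj_on_fun_updI[OF g_inj u_fresh] u_fresh b(2) by auto
  moreover have "\<forall>y\<in>set (xs @ [b]). (g(b := u)) y \<in> pool y"
    using g_pool u_pool by auto
  moreover have "\<forall>y\<in>set (xs @ [b]). \<forall>p. par y = Some p \<longrightarrow> E ((g(b := u)) p) ((g(b := u)) y)"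
    using g_edge u_edge par_xs snoc.prems(4) b(2) by fastforce
  ultimately show ?case by blast
qed

text \<open>A rooted spanning forest of \<open>kS\<^sub>l\<^sub>-\<^sub>1 \<union> P\<^sub>l\<close>: each star hangs from its centre and the
  path from its end \<open>Inr 0\<close>; \<open>sp_depth\<close> is the depth in this forest. \<open>sp_small_side\<close> is the
  colour class of the centres and the odd path vertices in the proper 2-colouring.\<close>

fun sp_parent :: "(nat \<times> nat) + nat \<Rightarrow> ((nat \<times> nat) + nat) option" where
  "sp_parent (Inr 0) = None"
| "sp_parent (Inr (Suc p)) = Some (Inr p)"
| "sp_parent (Inl (i, 0)) = None"
| "sp_parent (Inl (i, Suc j)) = Some (Inl (i, 0))"

fun sp_depth :: "(nat \<times> nat) + nat \<Rightarrow> nat" where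
  "sp_depth (Inr p) = p"
| "sp_depth (Inl (i, j)) = j"

fun sp_small_side :: "(nat \<times> nat) + nat \<Rightarrow> bool" where
  "sp_small_side (Inr p) = odd p"
| "sp_small_side (Inl (i, j)) = (j = 0)"

lemma finite_starsPath_V: "finite (starsPath_V k l)"
  unfolding starsPath_V_def by auto

lemma card_starsPath_V_le: "card (starsPath_V k l) \<le> k * l + l"
proof -
  have "card (starsPath_V k l)
      \<le> card (Inl ` ({..<k} \<times> {..<l}) :: ((nat \<times> nat) + nat) set) + card (Inr ` {..<l} :: ((nat \<times> nat) + nat) set)"
    unfolding starsPath_V_def by (rule card_Un_le)
  also have "\<dots> \<le> card ({..<k} \<times> {..<l}) + card {..<l}"
    by (intro add_mono card_image_le) auto
  finally show ?thesis by (simp add: card_cartesian_product)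
qed

lemma card_odd_lessThan: "card {p. p < l \<and> odd p} = l div 2"
proof -
  have "{p. p < l \<and> odd p} = (\<lambda>j. 2 * j + 1) ` {..<l div 2}"
    by (auto elim!: oddE intro: image_eqI)
  moreover have "inj_on (\<lambda>j. 2 * j + 1) {..<l div 2}" by (auto simp: inj_on_def)
  ultimately show ?thesis by (simp add: card_image)
qed

lemma card_small_side_le: "card {y \<in> starsPath_V k l. sp_small_side y} \<le> k + l div 2"
proof -
  let ?centres = "(\<lambda>i. Inl (i, 0)) ` {..<k} :: ((nat \<times> nat) + nat) set"
  let ?odd = "Inr ` {p. p < l \<and> odd p} :: ((nat \<times> nat) + nat) set"
  have "card {y \<in> starsPath_V k l. sp_small_side y} \<le> card (?centres \<union> ?odd)"
    by (intro card_mono) (auto simp: starsPath_V_def)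
  also have "\<dots> \<le> card ?centres + card ?odd" by (rule card_Un_le)
  also have "\<dots> \<le> card {..<k} + card {p. p < l \<and> odd p}"
    by (intro add_mono card_image_le) auto
  finally show ?thesis by (simp add: card_odd_lessThan)
qed

lemma sp_parent_in_starsPath_V:
  "b \<in> starsPath_V k l \<Longrightarrow> sp_parent b = Some p \<Longrightarrow> p \<in> starsPath_V k l \<and> sp_depth p < sp_depth b"
  by (induction b rule: sp_parent.induct) (auto simp: starsPath_V_def)

lemma sp_small_side_parent: "sp_parent b = Some p \<Longrightarrow> sp_small_side p \<noteq> sp_small_side b"
  by (induction b rule: sp_parent.induct) auto

lemma depth_sorted_list_starsPath_V:
  obtains vs where "set vs = starsPath_V k l" "distinct vs" "sorted (map sp_depth vs)"
proof -
  obtain xs where "set xs = starsPath_V k l" "distinct xs"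
    using finite_distinct_list[OF finite_starsPath_V] by blast
  then show thesis by (intro that[of "sort_key sp_depth xs"]) (simp_all add: sorted_sort_key)
qed

lemma simple_graph_sym: "simple_graph n E \<Longrightarrow> E u v \<Longrightarrow> E v u"
  unfolding simple_graph_def by blast

lemma simple_graph_edgeD: "simple_graph n E \<Longrightarrow> E u v \<Longrightarrow> u < n \<and> v < n \<and> u \<noteq> v"
  unfolding simple_graph_def by blast

lemma contains_copy_if_forest_edges:
  assumes G: "simple_graph n E" and inj: "inj_on g (starsPath_V k l)"
    and range: "g ` starsPath_V k l \<subseteq> {..<n}"
    and edges: "\<forall>y\<in>starsPath_V k l. \<forall>p. sp_parent y = Some p \<longrightarrow> E (g p) (g y)"
  shows "contains_copy n E (starsPath_V k l) (starsPath_E k l)"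
  unfolding contains_copy_def
proof (intro exI conjI ballI impI)
  show "inj_on g (starsPath_V k l)" "g ` starsPath_V k l \<subseteq> {..<n}" by (fact inj range)+
  fix a b assume a: "a \<in> starsPath_V k l" and b: "b \<in> starsPath_V k l"
    and ab: "starsPath_E k l a b"
  have "sp_parent b = Some a \<or> sp_parent a = Some b"
    using ab by (induction a b rule: starsPath_E.induct) (auto simp: gr0_conv_Suc)
  then show "E (g a) (g b)"
    using edges a b simple_graph_sym[OF G] by blast
qed

lemma contains_copy_if_greedy:
  assumes G: "simple_graph n E" and pool: "\<And>y. y \<in> starsPath_V k l \<Longrightarrow> pool y \<subseteq> {..<n}"
    and root: "\<And>b. b \<in> starsPath_V k l \<Longrightarrow> sp_parent b = None \<Longrightarrow> need b \<le> card (pool b)"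
    and child: "\<And>b p w. b \<in> starsPath_V k l \<Longrightarrow> sp_parent b = Some p \<Longrightarrow> w \<in> pool p \<Longrightarrow>
           need b \<le> card {u \<in> pool b. E w u}"
    and conflicts: "\<And>b. b \<in> starsPath_V k l \<Longrightarrow>
           card {y \<in> starsPath_V k l. y \<noteq> b \<and> pool y \<inter> pool b \<noteq> {}} < need b"
  shows "contains_copy n E (starsPath_V k l) (starsPath_E k l)"
proof -
  obtain vs where vs: "set vs = starsPath_V k l" "distinct vs" "sorted (map sp_depth vs)"
    by (rule depth_sorted_list_starsPath_V)
  have "\<exists>g. inj_on g (set vs) \<and> (\<forall>y\<in>set vs. g y \<in> pool y) \<and>
      (\<forall>y\<in>set vs. \<forall>p. sp_parent y = Some p \<longrightarrow> E (g p) (g y))"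
    by (rule greedy_forest_embedding[where par = sp_parent, OF equalityD1[OF vs(1)] vs(2,3) _
          finite_starsPath_V root child conflicts])
      (use sp_parent_in_starsPath_V vs(1) in blast)
  then obtain g where g: "inj_on g (starsPath_V k l)" "\<forall>y\<in>starsPath_V k l. g y \<in> pool y"
    "\<forall>y\<in>starsPath_V k l. \<forall>p. sp_parent y = Some p \<longrightarrow> E (g p) (g y)"
    unfolding vs(1) by blast
  show ?thesis
    by (rule contains_copy_if_forest_edges[OF G g(1) _ g(3)]) (use g(2) pool in blast)
qed

abbreviation degree_in :: "(nat \<Rightarrow> nat \<Rightarrow> bool) \<Rightarrow> nat set \<Rightarrow> nat \<Rightarrow> nat" where
  "degree_in E T w \<equiv> card {u \<in> T. E w u}"

lemma degree_in_le_card: "finite T \<Longrightarrow> degree_in E T w \<le> card T"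
  by (rule card_mono) auto

lemma contains_copy_if_min_degree:
  assumes G: "simple_graph n E" and T: "T \<subseteq> {..<n}" "T \<noteq> {}"
    and deg: "\<And>w. w \<in> T \<Longrightarrow> k * l + l < degree_in E T w"
  shows "contains_copy n E (starsPath_V k l) (starsPath_E k l)"
proof (rule contains_copy_if_greedy[OF G, where pool = "\<lambda>_. T" and need = "\<lambda>_. k * l + l"])
  obtain w where "w \<in> T" using T(2) by blast
  then show "k * l + l \<le> card T"
    using deg[of w] degree_in_le_card[of T E w] T(1) finite_subset by fastforce
  show "k * l + l \<le> degree_in E T w" if "w \<in> T" for w
    using deg[OF that] by simp
  show "card {y \<in> starsPath_V k l. y \<noteq> b \<and> T \<inter> T \<noteq> {}} < k * l + l"
    if "b \<in> starsPath_V k l" for b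
  proof -
    have "card {y \<in> starsPath_V k l. y \<noteq> b \<and> T \<inter> T \<noteq> {}} \<le> card (starsPath_V k l - {b})"
      by (intro card_mono) (auto simp: finite_starsPath_V)
    also have "\<dots> < card (starsPath_V k l)" by (rule card_Diff1_less[OF finite_starsPath_V that])
    finally show ?thesis using card_starsPath_V_le[of k l] by simp
  qed
qed (use T(1) in auto)

lemma contains_copy_if_bipartite_min_degree:
  assumes G: "simple_graph n E" and k: "k \<ge> 1"
    and A: "A \<subseteq> {..<n}" "A \<noteq> {}" and R: "R \<subseteq> {..<n}" and AR: "A \<inter> R = {}"
    and deg_A: "\<And>a. a \<in> A \<Longrightarrow> k + l div 2 \<le> degree_in E R a"
    and deg_R: "\<And>r. r \<in> R \<Longrightarrow> k * l + l < degree_in E A r"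
  shows "contains_copy n E (starsPath_V k l) (starsPath_E k l)"
proof -
  define pool where "pool y = (if sp_small_side y then R else A)" for y
  define need where "need y = (if sp_small_side y then k + l div 2 else k * l + l + 1)" for y
  obtain a where a: "a \<in> A" using A(2) by blast
  have card_R: "k + l div 2 \<le> card R"
    using deg_A[OF a] degree_in_le_card[of R E a] R finite_subset by fastforce
  then obtain r where r: "r \<in> R" using k by fastforce
  have card_A: "k * l + l + 1 \<le> card A"
    using deg_R[OF r] degree_in_le_card[of A E r] A(1) finite_subset by fastforce
  show ?thesis
  proof (rule contains_copy_if_greedy[OF G, where pool = pool and need = need])
    show "need b \<le> card (pool b)" for b
      using card_A card_R by (simp add: pool_def need_def)
    show "need b \<le> card {u \<in> pool b. E w u}" if "sp_parent b = Some p" "w \<in> pool p" for b p w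
      using sp_small_side_parent[OF that(1)] that(2) deg_A deg_R
      by (cases "sp_small_side b") (auto simp: pool_def need_def Suc_le_eq)
    show "card {y \<in> starsPath_V k l. y \<noteq> b \<and> pool y \<inter> pool b \<noteq> {}} < need b"
      if b: "b \<in> starsPath_V k l" for b
    proof (cases "sp_small_side b")
      case True
      have "{y \<in> starsPath_V k l. y \<noteq> b \<and> pool y \<inter> pool b \<noteq> {}}
          \<subseteq> {y \<in> starsPath_V k l. sp_small_side y} - {b}"
        using AR True by (auto simp: pool_def split: if_splits)
      then have "card {y \<in> starsPath_V k l. y \<noteq> b \<and> pool y \<inter> pool b \<noteq> {}}
          \<le> card ({y \<in> starsPath_V k l. sp_small_side y} - {b})"
        by (intro card_mono) (simp add: finite_starsPath_V)
      also have "\<dots> = card {y \<in> starsPath_V k l. sp_small_side y} - 1"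
        using b True by (simp add: finite_starsPath_V)
      also have "\<dots> < k + l div 2" using card_small_side_le[of k l] k by linarith
      finally show ?thesis using True by (simp add: need_def)
    next
      case False
      have "card {y \<in> starsPath_V k l. y \<noteq> b \<and> pool y \<inter> pool b \<noteq> {}} \<le> card (starsPath_V k l)"
        by (intro card_mono) (auto simp: finite_starsPath_V)
      then show ?thesis using False card_starsPath_V_le[of k l] by (simp add: need_def)
    qed
  qed (use A(1) R in \<open>auto simp: pool_def\<close>)
qed

lemma sum_degree_in_Diff1:
  assumes "finite S" "finite T" "w \<in> T"
  shows "(\<Sum>x\<in>S. degree_in E T x) = (\<Sum>x\<in>S. degree_in E (T - {w}) x) + card {x \<in> S. E x w}"
proof -
  have "degree_in E T x = degree_in E (T - {w}) x + of_bool (E x w)" for x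
  proof (cases "E x w")
    case True
    then have "{u \<in> T. E x u} = insert w {u \<in> T - {w}. E x u}" using assms(3) by auto
    then show ?thesis using assms(2) True by simp
  next
    case False
    then have "{u \<in> T. E x u} = {u \<in> T - {w}. E x u}" by auto
    then show ?thesis using False by simp
  qed
  then show ?thesis using assms(1) by (simp add: sum.distrib Int_def)
qed

lemma sum_degree_in_le_if_degenerate:
  assumes "finite T" and sym: "\<And>u v. E u v \<Longrightarrow> E v u" and irrefl: "\<And>u. \<not> E u u"
    and "\<And>U. U \<subseteq> T \<Longrightarrow> U \<noteq> {} \<Longrightarrow> \<exists>w\<in>U. degree_in E U w \<le> d"
  shows "(\<Sum>w\<in>T. degree_in E T w) \<le> 2 * d * card T"
  using assms(1,4)
proof (induction T rule: finite_psubset_induct)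
  case (psubset T)
  show ?case
  proof (cases "T = {}")
    case False
    then obtain w where w: "w \<in> T" "degree_in E T w \<le> d" using psubset.prems by blast
    let ?T' = "T - {w}"
    have IH: "(\<Sum>x\<in>?T'. degree_in E ?T' x) \<le> 2 * d * card ?T'"
      using psubset.IH[of ?T'] psubset.prems w(1) by blast
    have "(\<Sum>x\<in>T. degree_in E T x) = degree_in E T w + (\<Sum>x\<in>?T'. degree_in E T x)"
      by (rule sum.remove[OF psubset.hyps w(1)])
    also have "(\<Sum>x\<in>?T'. degree_in E T x) = (\<Sum>x\<in>?T'. degree_in E ?T' x) + card {x \<in> ?T'. E x w}"
      by (rule sum_degree_in_Diff1) (use psubset.hyps w(1) in auto)
    also have "{x \<in> ?T'. E x w} = {u \<in> T. E w u}"
      using sym irrefl by blast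
    finally have "(\<Sum>x\<in>T. degree_in E T x) = (\<Sum>x\<in>?T'. degree_in E ?T' x) + 2 * degree_in E T w"
      by linarith
    moreover have "card T = Suc (card ?T')" by (rule card_Suc_Diff1[symmetric, OF psubset.hyps w(1)])
    ultimately show ?thesis using IH w(2) by simp
  qed simp
qed

lemma sum_degree_between_le_if_degenerate:
  assumes "finite A" "finite R" and sym: "\<And>u v. E u v \<Longrightarrow> E v u"
    and "\<And>A' R'. A' \<subseteq> A \<Longrightarrow> R' \<subseteq> R \<Longrightarrow> A' \<noteq> {} \<Longrightarrow>
           (\<exists>a\<in>A'. degree_in E R' a \<le> c) \<or> (\<exists>r\<in>R'. degree_in E A' r \<le> d)"
  shows "(\<Sum>a\<in>A. degree_in E R a) \<le> c * card A + d * card R"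
  using assms(1,2,4)
proof (induction "card A + card R" arbitrary: A R rule: less_induct)
  case less
  consider "A = {}" | a where "a \<in> A" "degree_in E R a \<le> c" | r where "r \<in> R" "degree_in E A r \<le> d"
    using less.prems(3)[of A R] by blast
  then show ?case
  proof cases
    case 2
    have IH: "(\<Sum>x\<in>A - {a}. degree_in E R x) \<le> c * card (A - {a}) + d * card R"
    proof (rule less.hyps)
      show "card (A - {a}) + card R < card A + card R"
        using card_Diff1_less[OF less.prems(1) 2(1)] by simp
    qed (use less.prems in \<open>simp_all, meson Diff_subset subset_trans\<close>)
    moreover have "card A = Suc (card (A - {a}))" by (rule card_Suc_Diff1[symmetric, OF less.prems(1) 2(1)])
    ultimately show ?thesis using sum.remove[OF less.prems(1) 2(1), of "degree_in E R"] 2(2) by simp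
  next
    case 3
    have IH: "(\<Sum>x\<in>A. degree_in E (R - {r}) x) \<le> c * card A + d * card (R - {r})"
    proof (rule less.hyps)
      show "card A + card (R - {r}) < card A + card R"
        using card_Diff1_less[OF less.prems(2) 3(1)] by simp
    qed (use less.prems in \<open>simp_all, meson Diff_subset subset_trans\<close>)
    have "card {x \<in> A. E x r} = degree_in E A r" using sym by metis
    moreover have "card R = Suc (card (R - {r}))" by (rule card_Suc_Diff1[symmetric, OF less.prems(2) 3(1)])
    ultimately show ?thesis
      using IH 3(2) sum_degree_in_Diff1[OF less.prems(1,2) 3(1), of E] by simp
  qed simp
qed

lemma H_free_sum_degree_in_le:
  assumes G: "simple_graph n E" and free: "H_free k l n E" and T: "T \<subseteq> {..<n}"
  shows "(\<Sum>w\<in>T. degree_in E T w) \<le> 2 * (k * l + l) * card T"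
proof (rule sum_degree_in_le_if_degenerate)
  show "finite T" using T finite_subset by blast
  show "\<And>u v. E u v \<Longrightarrow> E v u" "\<And>u. \<not> E u u"
    using simple_graph_sym[OF G] simple_graph_edgeD[OF G] by blast+
  show "\<exists>w\<in>U. degree_in E U w \<le> k * l + l" if U: "U \<subseteq> T" "U \<noteq> {}" for U
  proof (rule ccontr)
    assume "\<not> ?thesis"
    then have "contains_copy n E (starsPath_V k l) (starsPath_E k l)"
      using contains_copy_if_min_degree[OF G _ U(2)] U(1) T by (auto simp: not_le)
    then show False using free unfolding H_free_def by blast
  qed
qed

lemma H_free_sum_degree_between_le:
  assumes G: "simple_graph n E" and free: "H_free k l n E" and k: "k \<ge> 1"
    and A: "A \<subseteq> {..<n}" and R: "R \<subseteq> {..<n}" and AR: "A \<inter> R = {}"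
  shows "(\<Sum>a\<in>A. degree_in E R a) \<le> (k + l div 2 - 1) * card A + (k * l + l) * card R"
proof (rule sum_degree_between_le_if_degenerate)
  show "finite A" "finite R" using A R finite_subset by blast+
  show "\<And>u v. E u v \<Longrightarrow> E v u" using simple_graph_sym[OF G] .
  show "(\<exists>a\<in>A'. degree_in E R' a \<le> k + l div 2 - 1) \<or> (\<exists>r\<in>R'. degree_in E A' r \<le> k * l + l)"
    if sub: "A' \<subseteq> A" "R' \<subseteq> R" "A' \<noteq> {}" for A' R'
  proof (rule ccontr)
    assume "\<not> ?thesis"
    then have "\<And>a. a \<in> A' \<Longrightarrow> k + l div 2 \<le> degree_in E R' a"
      and "\<And>r. r \<in> R' \<Longrightarrow> k * l + l < degree_in E A' r"
      using k by (auto simp: not_le)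
    moreover have "A' \<subseteq> {..<n}" "R' \<subseteq> {..<n}" "A' \<inter> R' = {}" using sub A R AR by auto
    ultimately have "contains_copy n E (starsPath_V k l) (starsPath_E k l)"
      using contains_copy_if_bipartite_min_degree[OF G k _ sub(3)] by blast
    then show False using free unfolding H_free_def by blast
  qed
qed

lemma H_free_sum_degree_into_le:
  assumes G: "simple_graph n E" and free: "H_free k l n E" and k: "k \<ge> 1"
    and S: "S \<subseteq> {..<n}" and T: "T \<subseteq> {..<n}"
  shows "(\<Sum>u\<in>S. degree_in E T u) \<le> (k + l div 2 - 1) * card S + 3 * (k * l + l) * card T"
proof -
  have finS: "finite S" using S finite_subset by blast
  have finT: "finite T" using T finite_subset by blast
  have "(\<Sum>u\<in>S. degree_in E T u) = (\<Sum>u\<in>S \<inter> T. degree_in E T u) + (\<Sum>u\<in>S - T. degree_in E T u)"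
    by (rule sum.Int_Diff[OF finS])
  also have "(\<Sum>u\<in>S \<inter> T. degree_in E T u) \<le> (\<Sum>u\<in>T. degree_in E T u)"
    by (rule sum_mono2[OF finT]) auto
  also have "\<dots> \<le> 2 * (k * l + l) * card T"
    by (rule H_free_sum_degree_in_le[OF G free T])
  also have "(\<Sum>u\<in>S - T. degree_in E T u) \<le> (k + l div 2 - 1) * card (S - T) + (k * l + l) * card T"
    by (rule H_free_sum_degree_between_le[OF G free k]) (use S T in auto)
  also have "(k + l div 2 - 1) * card (S - T) \<le> (k + l div 2 - 1) * card S"
    using finS by (simp add: card_mono)
  finally show ?thesis by (simp add: algebra_simps)
qed

lemma sum_degree_in_swap:
  assumes "finite S" "finite T" and sym: "\<And>u v. E u v \<Longrightarrow> E v u"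
  shows "(\<Sum>w\<in>T. degree_in E S w) = (\<Sum>u\<in>S. degree_in E T u)"
proof -
  have "E w u = E u w" for u w using sym by blast
  then have "(\<Sum>w\<in>T. \<Sum>u\<in>S. of_bool (E w u)) = (\<Sum>u\<in>S. \<Sum>w\<in>T. of_bool (E u w) :: nat)"
    by (subst sum.swap) simp
  then show ?thesis using assms(1,2) by (simp add: Int_def)
qed

text \<open>Vertices with more than \<open>3(kl + l)\<close> neighbours in \<open>S\<close> carry weight at most 1 each, and by
  the edge count into such a set they contribute at most \<open>h |S|\<close> beyond the threshold.\<close>

lemma H_free_weighted_degree_in_le:
  fixes y :: "nat \<Rightarrow> real"
  assumes G: "simple_graph n E" and free: "H_free k l n E" and k: "k \<ge> 1"
    and S: "S \<subseteq> {..<n}" and y: "\<And>w. w < n \<Longrightarrow> 0 \<le> y w \<and> y w \<le> 1"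
  shows "(\<Sum>w<n. degree_in E S w * y w)
     \<le> real (k + l div 2 - 1) * card S + 3 * real (k * l + l) * (\<Sum>w<n. y w)"
proof -
  define c where "c = 3 * real (k * l + l)"
  define T where "T = {w. w < n \<and> c < degree_in E S w}"
  have T: "T \<subseteq> {..<n}" unfolding T_def by auto
  have finS: "finite S" using S finite_subset by blast
  have finT: "finite T" using T finite_subset by blast
  have "degree_in E S w * y w \<le> c * y w + (if w \<in> T then degree_in E S w - c else 0)"
    if "w < n" for w
  proof (cases "w \<in> T")
    case True
    then have "(degree_in E S w - c) * y w \<le> degree_in E S w - c"
      using y[OF that] by (intro mult_left_le) (auto simp: T_def)
    then show ?thesis using True by (simp add: algebra_simps)
  next
    case False
    then have "degree_in E S w * y w \<le> c * y w"
      using y[OF that] that by (intro mult_right_mono) (auto simp: T_def)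
    then show ?thesis using False by simp
  qed
  then have "(\<Sum>w<n. degree_in E S w * y w)
      \<le> (\<Sum>w<n. c * y w + (if w \<in> T then degree_in E S w - c else 0))"
    by (intro sum_mono) simp
  also have "\<dots> = c * (\<Sum>w<n. y w) + (\<Sum>w\<in>T. degree_in E S w - c)"
    using T by (simp add: sum.distrib sum_distrib_left sum.If_cases Int_absorb1)
  also have "(\<Sum>w\<in>T. degree_in E S w - c) = real (\<Sum>w\<in>T. degree_in E S w) - c * card T"
    by (simp add: sum_subtractf)
  also have "(\<Sum>w\<in>T. degree_in E S w) = (\<Sum>u\<in>S. degree_in E T u)"
    using sum_degree_in_swap[OF finS finT] simple_graph_sym[OF G] by blast
  also have "\<dots> \<le> (k + l div 2 - 1) * card S + 3 * (k * l + l) * card T"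
    by (rule H_free_sum_degree_into_le[OF G free k S T])
  finally show ?thesis unfolding c_def by (simp only: of_nat_add of_nat_mult of_nat_numeral) linarith
qed

lemma H_free_eigenvector_sum_le:
  fixes y :: "nat \<Rightarrow> real"
  assumes G: "simple_graph n E" and free: "H_free k l n E" and k: "k \<ge> 1"
    and S: "S \<subseteq> {..<n}" and y: "\<And>w. w < n \<Longrightarrow> 0 \<le> y w \<and> y w \<le> 1"
    and eig: "\<And>w. w < n \<Longrightarrow> (\<Sum>u\<in>{u. u < n \<and> E w u}. y u) = \<rho> * y w"
  shows "\<rho> * (\<Sum>u\<in>S. y u) \<le> real (k + l div 2 - 1) * card S + 3 * real (k * l + l) * (\<Sum>w<n. y w)"
proof -
  have finS: "finite S" using S finite_subset by blast
  have sym: "E u w = E w u" for u w using simple_graph_sym[OF G] by blast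
  have "\<rho> * (\<Sum>u\<in>S. y u) = (\<Sum>u\<in>S. \<rho> * y u)" by (simp add: sum_distrib_left)
  also have "\<dots> = (\<Sum>u\<in>S. \<Sum>w\<in>{w. w < n \<and> E u w}. y w)"
    using S by (intro sum.cong refl) (auto simp: eig)
  also have "\<dots> = (\<Sum>u\<in>S. \<Sum>w<n. of_bool (E u w) * y w)"
    by (simp add: Int_def conj_commute lessThan_def)
  also have "\<dots> = (\<Sum>w<n. degree_in E S w * y w)"
    using finS by (subst sum.swap) (simp add: sum_distrib_right[symmetric] Int_def sym)
  also have "\<dots> \<le> real (k + l div 2 - 1) * card S + 3 * real (k * l + l) * (\<Sum>w<n. y w)"
    by (rule H_free_weighted_degree_in_le[OF G free k S y])
  finally show ?thesis .
qed

lemma H_free_eigenvector_bounds: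
  fixes y :: "nat \<Rightarrow> real"
  assumes G: "simple_graph n E" and free: "H_free k l n E" and k: "k \<ge> 1"
    and y: "\<And>w. w < n \<Longrightarrow> 0 \<le> y w \<and> y w \<le> 1"
    and eig: "\<And>w. w < n \<Longrightarrow> (\<Sum>u\<in>{u. u < n \<and> E w u}. y u) = \<rho> * y w"
  shows "\<rho> * (\<Sum>w<n. y w) \<le> real (k + l div 2 - 1) * n + 3 * real (k * l + l) * (\<Sum>w<n. y w)"
    and "v < n \<Longrightarrow>
      \<rho> * (\<rho> * y v) \<le> real (k + l div 2 - 1) * degree n E v + 3 * real (k * l + l) * (\<Sum>w<n. y w)"
proof -
  note sum_le = H_free_eigenvector_sum_le[OF G free k _ y eig]
  show "\<rho> * (\<Sum>w<n. y w) \<le> real (k + l div 2 - 1) * n + 3 * real (k * l + l) * (\<Sum>w<n. y w)"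
    using sum_le[of "{..<n}"] by simp
  assume v: "v < n"
  have "degree n E v = card {u. u < n \<and> E v u}"
    unfolding degree_def using simple_graph_sym[OF G] by metis
  moreover have "{u. u < n \<and> E v u} \<subseteq> {..<n}" by auto
  ultimately show "\<rho> * (\<rho> * y v)
      \<le> real (k + l div 2 - 1) * degree n E v + 3 * real (k * l + l) * (\<Sum>w<n. y w)"
    using sum_le[of "{u. u < n \<and> E v u}"] eig[OF v] by simp
qed

definition complete_bipartite :: "nat \<Rightarrow> nat \<Rightarrow> nat \<Rightarrow> nat \<Rightarrow> bool" where
  "complete_bipartite n h i j \<longleftrightarrow> i < n \<and> j < n \<and> (i < h) \<noteq> (j < h)"

lemma simple_graph_complete_bipartite: "simple_graph n (complete_bipartite n h)"
  unfolding simple_graph_def complete_bipartite_def by auto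

text \<open>\<open>kS\<^sub>l\<^sub>-\<^sub>1 \<union> P\<^sub>l\<close> has a matching of \<open>k + l div 2\<close> edges, and every edge of a copy
  in \<open>K\<^sub>h\<^sub>,\<^sub>n\<^sub>-\<^sub>h\<close> has an end in the part \<open>{..<h}\<close>.\<close>

lemma H_free_complete_bipartite:
  assumes l: "l \<ge> 2" and h: "h < k + l div 2"
  shows "H_free k l n (complete_bipartite n h)"
  unfolding H_free_def contains_copy_def
proof
  assume "\<exists>f. inj_on f (starsPath_V k l) \<and> f ` starsPath_V k l \<subseteq> {..<n} \<and>
    (\<forall>a\<in>starsPath_V k l. \<forall>b\<in>starsPath_V k l. starsPath_E k l a b \<longrightarrow> complete_bipartite n h (f a) (f b))"
  then obtain g where g_inj: "inj_on g (starsPath_V k l)"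
    and g_edge: "\<And>a b. a \<in> starsPath_V k l \<Longrightarrow> b \<in> starsPath_V k l \<Longrightarrow> starsPath_E k l a b \<Longrightarrow>
      (g a < h) \<noteq> (g b < h)"
    unfolding complete_bipartite_def by blast
  define M :: "(nat + nat) set" where "M = Inl ` {..<k} \<union> Inr ` {..<l div 2}"
  define e1 :: "nat + nat \<Rightarrow> (nat \<times> nat) + nat" where
    "e1 = case_sum (\<lambda>i. Inl (i, 0)) (\<lambda>j. Inr (2 * j))"
  define e2 :: "nat + nat \<Rightarrow> (nat \<times> nat) + nat" where
    "e2 = case_sum (\<lambda>i. Inl (i, 1)) (\<lambda>j. Inr (2 * j + 1))"
  have matching: "e1 m \<in> starsPath_V k l \<and> e2 m \<in> starsPath_V k l \<and> starsPath_E k l (e1 m) (e2 m)"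
    if "m \<in> M" for m
    using that l by (auto simp: M_def e1_def e2_def starsPath_V_def)
  define low where "low m = (if g (e1 m) < h then e1 m else e2 m)" for m
  have low: "low m \<in> starsPath_V k l \<and> g (low m) < h" if "m \<in> M" for m
    using matching[OF that] g_edge by (auto simp: low_def)
  have "inj_on low M"
  proof (rule inj_on_inverseI)
    show "case_sum (\<lambda>(i, j). Inl i) (\<lambda>p. Inr (p div 2)) (low m) = m" for m
      by (cases m) (auto simp: low_def e1_def e2_def)
  qed
  then have "inj_on (g \<circ> low) M"
    using g_inj low by (auto intro: comp_inj_on inj_on_subset)
  moreover have "(g \<circ> low) ` M \<subseteq> {..<h}" using low by auto
  ultimately have "card M \<le> h" using card_inj_on_le[of "g \<circ> low" M "{..<h}"] by simp
  moreover have "card M = k + l div 2"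
    unfolding M_def by (subst card_Un_disjoint) (auto simp: card_image)
  ultimately show False using h by simp
qed

lemma norm_le_spectral_radius_if_eigenvector:
  assumes A: "A \<in> carrier_mat n n" and v: "v \<in> carrier_vec n" "v \<noteq> 0\<^sub>v n"
    and Av: "A *\<^sub>v v = lam \<cdot>\<^sub>v v"
  shows "norm lam \<le> spectral_radius A"
proof -
  have "n > 0" using v by (auto intro!: eq_vecI)
  moreover have "lam \<in> spectrum A"
    using A v Av unfolding spectrum_def eigenvalue_def eigenvector_def by auto
  ultimately show ?thesis using spectral_radius_mem_max(2)[OF A] by blast
qed

lemma spectral_radius_complete_bipartite_ge:
  assumes "0 < h" "h < n"
  shows "sqrt (real h * real (n - h)) \<le> graph_spectral_radius n (complete_bipartite n h)"
proof -
  define a where "a = sqrt (real (n - h))"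
  define b where "b = sqrt (real h)"
  define f where "f j = (if j < h then a else b)" for j
  define v where "v = vec n (\<lambda>j. complex_of_real (f j))"
  let ?A = "adj_mat n (complete_bipartite n h)"
  have row: "(\<Sum>j<n. of_bool (complete_bipartite n h i j) * f j) = a * b * f i" if "i < n" for i
  proof (cases "i < h")
    case True
    then have "(\<Sum>j<n. of_bool (complete_bipartite n h i j) * f j) = (\<Sum>j\<in>{h..<n}. b)"
      using that by (intro sum.mono_neutral_cong_right) (auto simp: complete_bipartite_def f_def)
    then show ?thesis using True by (simp add: f_def a_def)
  next
    case False
    then have "(\<Sum>j<n. of_bool (complete_bipartite n h i j) * f j) = (\<Sum>j<h. a)"
      using that assms by (intro sum.mono_neutral_cong_right) (auto simp: complete_bipartite_def f_def)
    then show ?thesis using False by (simp add: f_def b_def)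
  qed
  have "?A *\<^sub>v v = complex_of_real (a * b) \<cdot>\<^sub>v v"
  proof (rule eq_vecI)
    fix i assume "i < dim_vec (complex_of_real (a * b) \<cdot>\<^sub>v v)"
    then have i: "i < n" by (simp add: v_def)
    have "(?A *\<^sub>v v) $ i = (\<Sum>j<n. complex_of_real (of_bool (complete_bipartite n h i j) * f j))"
      using i by (auto simp: adj_mat_def v_def scalar_prod_def lessThan_atLeast0 intro!: sum.cong)
    also have "\<dots> = complex_of_real (a * b * f i)" by (simp only: of_real_sum[symmetric] row[OF i])
    finally show "(?A *\<^sub>v v) $ i = (complex_of_real (a * b) \<cdot>\<^sub>v v) $ i" using i by (simp add: v_def)
  qed (simp add: v_def adj_mat_def)
  moreover have "v \<noteq> 0\<^sub>v n"
  proof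
    assume "v = 0\<^sub>v n"
    then have "v $ 0 = 0" using assms by simp
    then show False using assms by (simp add: v_def f_def a_def)
  qed
  ultimately have "norm (complex_of_real (a * b)) \<le> spectral_radius ?A"
    by (intro norm_le_spectral_radius_if_eigenvector[of _ n]) (auto simp: adj_mat_def v_def)
  then show ?thesis unfolding norm_of_real
    by (simp add: graph_spectral_radius_def a_def b_def real_sqrt_mult mult.commute)
qed

lemma spectral_radius_ge_if_extremal:
  assumes l: "l \<ge> 2" and h: "0 < h" "h < k + l div 2" "h < n"
    and extremal: "\<And>E'. simple_graph n E' \<Longrightarrow> H_free k l n E' \<Longrightarrow>
                     graph_spectral_radius n E' \<le> graph_spectral_radius n E"
  shows "0 \<le> graph_spectral_radius n E"
    and "real h * (real n - real h) \<le> (graph_spectral_radius n E)\<^sup>2"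
proof -
  have "sqrt (real h * real (n - h)) \<le> graph_spectral_radius n (complete_bipartite n h)"
    using h by (intro spectral_radius_complete_bipartite_ge) auto
  also have "\<dots> \<le> graph_spectral_radius n E"
    using l h by (intro extremal simple_graph_complete_bipartite H_free_complete_bipartite)
  finally have sqrt_le: "sqrt (real h * real (n - h)) \<le> graph_spectral_radius n E" .
  moreover have "0 \<le> sqrt (real h * real (n - h))" by simp
  ultimately show "0 \<le> graph_spectral_radius n E" by linarith
  from power_mono[OF sqrt_le, of 2] show "real h * (real n - real h) \<le> (graph_spectral_radius n E)\<^sup>2"
    using h by (simp add: of_nat_diff)
qed

lemma three_mul_card_le_t:
  fixes k l :: nat
  assumes "l \<ge> 4"
  shows "3 * real (k * l + l) \<le> (real l ^ 2 - real l + 1) * real k + (real l ^ 2 + 3 * real l - 2) / 2"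
proof -
  have l4: "4 \<le> real l" using assms by simp
  have ll: "4 * real l \<le> real l * real l" using l4 by (intro mult_right_mono) auto
  have "0 \<le> real k * (real l * real l - 4 * real l + 1)" using ll by simp
  then have "4 * (real k * real l) \<le> real k * (real l * real l) + real k" by (simp add: algebra_simps)
  moreover have "3 * real (k * l + l) = 3 * (real k * real l) + 3 * real l" by simp
  ultimately have "3 * real (k * l + l)
      \<le> real k * (real l * real l) - real k * real l + real k + (real l * real l + 3 * real l - 2) / 2"
    using l4 ll by argo
  also have "\<dots> = (real l ^ 2 - real l + 1) * real k + (real l ^ 2 + 3 * real l - 2) / 2"
    by (simp add: power2_eq_square algebra_simps)
  finally show ?thesis .
qed

lemma alpha_bounds:
  fixes h t \<alpha> N :: real
  assumes h: "2 \<le> h" and t: "3 \<le> t" and \<alpha>: "\<alpha> = 1 / (2 * (h + 1) * t\<^sup>2)"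
    and N: "t\<^sup>2 / \<alpha> ^ 3 \<le> N"
  shows "0 < \<alpha>" "\<alpha> \<le> 1/2" "4 * h \<le> N" "t \<le> \<alpha> * sqrt N"
proof -
  define D where "D = 2 * (h + 1) * t\<^sup>2"
  have "1 \<le> t\<^sup>2" using t power_mono[OF _ , of 1 t 2] by simp
  then have D: "2 * (h + 1) \<le> D" using h mult_left_mono[of 1 "t\<^sup>2" "2 * (h + 1)"] by (simp add: D_def)
  then have "2 \<le> D" using h by simp
  moreover have \<alpha>D: "\<alpha> = 1 / D" using \<alpha> by (simp add: D_def)
  ultimately show \<alpha>0: "0 < \<alpha>" and \<alpha>_half: "\<alpha> \<le> 1/2"
    using divide_left_mono[of 2 D 1] by simp_all
  have "t / \<alpha> = D * t" using \<alpha> D by (simp add: D_def)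
  then have R: "4 * h \<le> t / \<alpha>" "1 \<le> t / \<alpha>"
    using D h t mult_mono[OF D(1) t] by (auto simp: algebra_simps)
  have "(t / \<alpha>)\<^sup>2 \<le> t\<^sup>2 / \<alpha> ^ 3"
    using \<alpha>0 \<alpha>_half by (simp add: power_divide divide_left_mono power_decreasing)
  with N have R2: "(t / \<alpha>)\<^sup>2 \<le> N" by linarith
  moreover have "t / \<alpha> \<le> (t / \<alpha>)\<^sup>2"
  proof -
    have "t / \<alpha> * 1 \<le> t / \<alpha> * (t / \<alpha>)" using R(2) by (intro mult_left_mono) auto
    then show ?thesis by (simp only: power2_eq_square mult_1_right)
  qed
  ultimately show "4 * h \<le> N" using R(1) by linarith
  have "t / \<alpha> \<le> sqrt N" using R2 R(2) real_le_rsqrt by auto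
  then show "t \<le> \<alpha> * sqrt N" using \<alpha>0 by (simp add: divide_le_eq mult.commute)
qed

lemma degree_bound_arith:
  fixes h N \<alpha> F \<rho> Y yv d :: real
  assumes h: "2 \<le> h" and N: "4 * h \<le> N" and \<alpha>: "0 < \<alpha>" "\<alpha> \<le> 1/2" and F: "0 < F"
    and F_le: "3 * F \<le> \<alpha> * sqrt N" and \<rho>: "0 \<le> \<rho>" "h * (N - h) \<le> \<rho>\<^sup>2"
    and Y: "0 \<le> Y" "\<rho> * Y \<le> h * N + 3 * F * Y"
    and v: "\<rho> * (\<rho> * yv) \<le> h * d + 3 * F * Y" "4 * \<alpha> < yv"
  shows "\<alpha> * N / 3 < d"
proof (rule ccontr)
  assume "\<not> ?thesis"
  then have d: "d \<le> \<alpha> * N / 3" by simp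
  define P where "P = h * N"
  have P: "0 < P" using h N by (simp add: P_def)
  have "0 \<le> h * (3 * h - 4)" using h by simp
  moreover have "(h - 1) * (4 * h) \<le> (h - 1) * N" using h N by (intro mult_left_mono) auto
  ultimately have "N \<le> h * (N - h)" by (simp add: algebra_simps)
  then have "sqrt N \<le> \<rho>" using \<rho> by (intro real_le_lsqrt) auto
  then have \<alpha>\<rho>: "3 * F \<le> \<alpha> * \<rho>" using F_le \<alpha>(1) mult_left_mono[of "sqrt N" \<rho> \<alpha>] by linarith
  moreover have "\<alpha> * \<rho> \<le> 1/2 * \<rho>" using \<alpha>(2) \<rho>(1) by (rule mult_right_mono)
  ultimately have "6 * F * Y \<le> \<rho> * Y" using Y(1) mult_right_mono[of "6 * F" \<rho> Y] by linarith
  then have \<rho>Y: "\<rho> * Y \<le> 2 * P" using Y(2) by (simp add: P_def)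
  have "3 / 4 * P \<le> h * (N - h)" using h N mult_left_mono[of "3 / 4 * N" "N - h" h] by (simp add: P_def)
  then have \<rho>2: "3 / 4 * P \<le> \<rho>\<^sup>2" using \<rho>(2) by linarith
  have "3 * \<alpha> * P = 3 / 4 * P * (4 * \<alpha>)" by simp
  also have "\<dots> < 3 / 4 * P * yv" using v(2) P by simp
  also have "\<dots> \<le> \<rho>\<^sup>2 * yv" using \<rho>2 v(2) \<alpha>(1) by (intro mult_right_mono) auto
  also have "\<dots> \<le> h * d + 3 * F * Y" using v(1) by (simp add: power2_eq_square mult.assoc)
  also have "h * d \<le> \<alpha> * P / 3" using d h mult_left_mono[of d "\<alpha> * N / 3" h] by (simp add: P_def)
  finally have "8 / 3 * \<alpha> * P < 3 * F * Y" by simp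
  moreover have "0 < \<rho>"
  proof -
    have "\<rho> \<noteq> 0" using \<rho>2 P by auto
    then show ?thesis using \<rho>(1) by simp
  qed
  ultimately have "\<rho> * (8 / 3 * \<alpha> * P) < \<rho> * (3 * F * Y)" by simp
  also have "\<dots> \<le> 3 * F * (2 * P)" using mult_left_mono[OF \<rho>Y, of "3 * F"] F by (simp add: ac_simps)
  finally have "(8 / 3 * (\<alpha> * \<rho>)) * P < (6 * F) * P" by (simp add: algebra_simps)
  then have "8 / 3 * (\<alpha> * \<rho>) < 6 * F" using P by simp
  then show False using \<alpha>\<rho> F by linarith
qed

theorem lemma4p2:
  fixes k l n :: nat and E :: "nat \<Rightarrow> nat \<Rightarrow> bool" and x :: "nat \<Rightarrow> real"
    and h :: nat and t \<alpha> \<rho> :: real and z :: nat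
  assumes k: "k \<ge> 1" and l: "l \<ge> 4"
    and h_def: "h = k + l div 2 - 1"
    and t_def: "t = (real l ^ 2 - real l + 1) * real k + (real l ^ 2 + 3 * real l - 2) / 2"
    and alpha_def: "\<alpha> = 1 / (2 * (real h + 1) * t ^ 2)"
    and n_large: "real n \<ge> t ^ 2 / \<alpha> ^ 3"
    and G: "simple_graph n E" and Gfree: "H_free k l n E"
    and extremal: "\<And>E'. simple_graph n E' \<Longrightarrow> H_free k l n E' \<Longrightarrow>
                     graph_spectral_radius n E' \<le> graph_spectral_radius n E"
    and conn: "graph_connected n E"
    and rho_def: "\<rho> = graph_spectral_radius n E"
    and x_pos: "\<And>v. v < n \<Longrightarrow> x v > 0"
    and x_unit: "(\<Sum>v<n. (x v)\<^sup>2) = 1"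
    and x_eig: "\<And>v. v < n \<Longrightarrow> (\<Sum>u\<in>{u. u < n \<and> E v u}. x u) = \<rho> * x v"
    and z: "z < n" and z_max: "\<And>v. v < n \<Longrightarrow> x v \<le> x z"
  shows "\<forall>v<n. x v > 4 * \<alpha> * x z \<longrightarrow> real (degree n E v) > \<alpha> * real n / 3"
proof (intro allI impI)
  fix v assume v: "v < n" and xv: "x v > 4 * \<alpha> * x z"
  define F where "F = real (k * l + l)"
  have "2 \<le> l div 2" using l by linarith
  then have h: "2 \<le> real h" using h_def k by simp
  have F: "1 \<le> F" unfolding F_def using l by (simp add: add_increasing)
  have "3 * F \<le> t" unfolding t_def F_def using l by (rule three_mul_card_le_t)
  then have \<alpha>: "0 < \<alpha>" "\<alpha> \<le> 1/2" "4 * real h \<le> n" "3 * F \<le> \<alpha> * sqrt n"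
    using alpha_bounds[OF h _ alpha_def n_large] F by auto
  have "h < n" using \<alpha>(3) h by linarith
  then have \<rho>: "0 \<le> \<rho>" "real h * (real n - real h) \<le> \<rho>\<^sup>2"
    unfolding rho_def using h h_def k l
    by (intro spectral_radius_ge_if_extremal[OF _ _ _ _ extremal]; simp)+
  define y where "y w = x w / x z" for w
  have y: "0 \<le> y w \<and> y w \<le> 1" if "w < n" for w
    using x_pos[OF that] z_max[OF that] x_pos[OF z] by (simp add: y_def)
  have eig: "(\<Sum>u\<in>{u. u < n \<and> E w u}. y u) = \<rho> * y w" if "w < n" for w
    using x_eig[OF that] by (simp add: y_def sum_divide_distrib[symmetric])
  have bounds: "\<rho> * (\<Sum>w<n. y w) \<le> real h * n + 3 * F * (\<Sum>w<n. y w)"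
    "\<rho> * (\<rho> * y v) \<le> real h * degree n E v + 3 * F * (\<Sum>w<n. y w)"
    unfolding h_def F_def by (intro H_free_eigenvector_bounds[OF G Gfree k] y eig v; assumption)+
  have "4 * \<alpha> < y v" using xv x_pos[OF z] by (simp add: y_def pos_less_divide_eq)
  moreover have "0 \<le> (\<Sum>w<n. y w)" using y by (intro sum_nonneg) simp
  ultimately show "real (degree n E v) > \<alpha> * real n / 3"
    using degree_bound_arith[OF h \<alpha>(3,1,2) _ \<alpha>(4) \<rho> _ bounds] F by simp
qed

end
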